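(* Let $G_1=(\{p_j\},\{\mu_j\},\{\sigma_j^2\})_{j=1}^n$ and $G_2=(\{p'_k\},\{\mu'_k\},\{\sigma_k'^2\})_{k=1}^{n'}$ be univariate Gaussian mixtures with all $\sigma_j>0$ and $\sigma'_k>0$, and let $L=C_2^2(G_1,G_2)$, regarded as a function of the parameters $\mu_1,\dots,\mu_n,\sigma_1,\dots,\sigma_n$ of $G_1$ (with $G_2$ and $\{p_j\}$ fixed). Then for every $j=1,\dots,n$, $$\left|\frac{\partial L}{\partial\mu_j}\right|\le 4,\qquad \left|\frac{\partial L}{\partial\sigma_j}\right|\le 4.$$ In particular $L$ is globally Lipschitz in $\{\mu_j\}$ and $\{\sigma_j\}$.
   Context: A univariate Gaussian mixture $G=(\{p_j\},\{\mu_j\},\{\sigma_j^2\})_{j=1}^n$ has $p_j\ge0$, $\sum_jp_j=1$, $\mu_j\in\mathbb{R}$, $\sigma_j>0$, and CDF $\sum_jp_j\Phi((x-\mu_j)/\sigma_j)$, with $\Phi$ the standard normal CDF. The Cramér 2-distance is $C_2(G_1,G_2)=\left(\int_{\mathbb{R}}|\mathrm{CDF}(G_1)-\mathrm{CDF}(G_2)|^2dx\right)^{1/2}$. *)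

theory Defs
  imports "HOL-Probability.Probability"
begin

definition std_normal_cdf :: "real \<Rightarrow> real" where
  "std_normal_cdf x = (LBINT t:{..x}. std_normal_density t)"

definition gm_cdf :: "nat \<Rightarrow> (nat \<Rightarrow> real) \<Rightarrow> (nat \<Rightarrow> real) \<Rightarrow> (nat \<Rightarrow> real) \<Rightarrow> real \<Rightarrow> real" where
  "gm_cdf n p mu sg x = (\<Sum>j<n. p j * std_normal_cdf ((x - mu j) / sg j))"

definition is_gm :: "nat \<Rightarrow> (nat \<Rightarrow> real) \<Rightarrow> (nat \<Rightarrow> real) \<Rightarrow> bool" where
  "is_gm n p sg \<longleftrightarrow> (\<forall>j<n. p j \<ge> 0 \<and> sg j > 0) \<and> (\<Sum>j<n. p j) = 1"

definition cramer2_sq ::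
  "nat \<Rightarrow> (nat \<Rightarrow> real) \<Rightarrow> (nat \<Rightarrow> real) \<Rightarrow> (nat \<Rightarrow> real) \<Rightarrow>
   nat \<Rightarrow> (nat \<Rightarrow> real) \<Rightarrow> (nat \<Rightarrow> real) \<Rightarrow> (nat \<Rightarrow> real) \<Rightarrow> real" where
  "cramer2_sq n p mu sg n' p' mu' sg' =
     (LBINT x. \<bar>gm_cdf n p mu sg x - gm_cdf n' p' mu' sg' x\<bar>\<^sup>2)"

end

theory Submission
  imports Defs
begin

text \<open>Let u_t = F_t - H be the difference of the two mixture CDFs, where only the j-th
  component of F_t depends on the parameter t (the mean or the standard deviation of that
  component). Both CDFs take values in [0, 1], so \<bar>u_t\<bar> \<le> 1, and the derivative
  2 \<integral> u_t \<partial>u_t of \<integral> u_t^2 is at most 2 \<integral> \<bar>\<partial>u_t\<bar> in absolute value. Up to sign,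
  \<partial>u_t is p_j times a normal density (for the mean), resp. p_j times a normal density times
  \<bar>x - \<mu>_j\<bar> / \<sigma>_j (for the standard deviation), which integrates to p_j, resp. p_j \<surd>(2/\<pi>).
  Hence both partial derivatives are bounded by 2. Differentiation under the integral sign is
  justified by dominated convergence with Gaussian majorants, and u_t^2 is integrable because
  u_t^2 \<le> \<bar>u_t\<bar> and every mixture CDF differs from \<Phi> by an integrable function.\<close>

lemma integral_dominated_convergence_at:
  fixes s :: "real \<Rightarrow> 'a \<Rightarrow> 'b::{banach, second_countable_topology}"
  assumes f: "f \<in> borel_measurable M" and s: "\<And>t. s t \<in> borel_measurable M"
    and w: "integrable M w"
    and lim: "AE x in M. ((\<lambda>t. s t x) \<longlongrightarrow> f x) (at t0)"
    and bound: "\<forall>\<^sub>F t in at t0. AE x in M. norm (s t x) \<le> w x"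
  shows "((\<lambda>t. integral\<^sup>L M (s t)) \<longlongrightarrow> integral\<^sup>L M f) (at t0)"
  unfolding tendsto_at_iff_sequentially comp_def
proof (intro allI impI)
  fix X :: "nat \<Rightarrow> real"
  assume "\<forall>i. X i \<in> UNIV - {t0}" and "X \<longlonglongrightarrow> t0"
  then have X: "filterlim X (at t0) sequentially"
    by (intro filterlim_atI) auto
  from filterlim_iff[THEN iffD1, OF X, rule_format, OF bound]
  obtain N where N: "\<And>i. N \<le> i \<Longrightarrow> AE x in M. norm (s (X i) x) \<le> w x"
    by (auto simp: eventually_sequentially)
  show "(\<lambda>i. integral\<^sup>L M (s (X i))) \<longlonglongrightarrow> integral\<^sup>L M f"
  proof (rule LIMSEQ_offset, rule integral_dominated_convergence)
    show "AE x in M. norm (s (X (i + N)) x) \<le> w x" for i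
      by (rule N) simp
    show "AE x in M. (\<lambda>i. s (X (i + N)) x) \<longlonglongrightarrow> f x"
      using lim
    proof eventually_elim
      fix x assume "((\<lambda>t. s t x) \<longlongrightarrow> f x) (at t0)"
      then show "(\<lambda>i. s (X (i + N)) x) \<longlonglongrightarrow> f x"
        by (intro LIMSEQ_ignore_initial_segment filterlim_compose[OF _ X])
    qed
  qed (use f s w in auto)
qed

lemma has_real_derivative_lebesgue_integral:
  fixes g g' :: "real \<Rightarrow> real \<Rightarrow> real" and w :: "real \<Rightarrow> real"
  assumes "\<delta> > 0"
    and g_meas: "\<And>t. g t \<in> borel_measurable lborel"
    and g'_meas: "g' t0 \<in> borel_measurable lborel"
    and g_int: "integrable lborel (g t0)"
    and w_int: "integrable lborel w"
    and g_deriv: "\<And>t x. \<bar>t - t0\<bar> < \<delta> \<Longrightarrow> ((\<lambda>t. g t x) has_real_derivative g' t x) (at t)"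
    and g'_bound: "\<And>t x. \<bar>t - t0\<bar> < \<delta> \<Longrightarrow> \<bar>g' t x\<bar> \<le> w x"
  shows "((\<lambda>t. \<integral>x. g t x \<partial>lborel) has_real_derivative (\<integral>x. g' t0 x \<partial>lborel)) (at t0)"
proof -
  have lipschitz: "\<bar>g t x - g t0 x\<bar> \<le> w x * \<bar>t - t0\<bar>" if "\<bar>t - t0\<bar> < \<delta>" for t x
    using field_differentiable_bound[of "ball t0 \<delta>" "\<lambda>t. g t x" "\<lambda>t. g' t x" "w x" t t0]
      g_deriv g'_bound that \<open>\<delta> > 0\<close>
    by (auto simp: dist_real_def has_field_derivative_at_within abs_minus_commute)
  have g_int_near: "integrable lborel (g t)" if "\<bar>t - t0\<bar> < \<delta>" for t
  proof -
    have "integrable lborel (\<lambda>x. g t x - g t0 x)"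
      by (rule Bochner_Integration.integrable_bound[of _ "\<lambda>x. w x * \<bar>t - t0\<bar>"])
         (use w_int g_meas lipschitz[OF that] in \<open>auto intro: order_trans[OF _ abs_ge_self]\<close>)
    from Bochner_Integration.integrable_add[OF this g_int] show ?thesis
      by simp
  qed
  have near: "\<forall>\<^sub>F t in at t0. \<bar>t - t0\<bar> < \<delta> \<and> t \<noteq> t0"
    using \<open>\<delta> > 0\<close> by (auto simp: eventually_at dist_real_def)
  define q where "q t x = (g t x - g t0 x) / (t - t0)" for t x
  have "((\<lambda>t. \<integral>x. q t x \<partial>lborel) \<longlongrightarrow> (\<integral>x. g' t0 x \<partial>lborel)) (at t0)"
  proof (rule integral_dominated_convergence_at[OF g'_meas _ w_int])
    show "q t \<in> borel_measurable lborel" for t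
      unfolding q_def using g_meas[of t] g_meas[of t0] by measurable
    show "AE x in lborel. ((\<lambda>t. q t x) \<longlongrightarrow> g' t0 x) (at t0)"
      using g_deriv[of t0] \<open>\<delta> > 0\<close> by (simp add: q_def has_field_derivative_iff)
    show "\<forall>\<^sub>F t in at t0. AE x in lborel. norm (q t x) \<le> w x"
      using near by eventually_elim (auto simp: q_def abs_divide divide_le_eq lipschitz)
  qed
  moreover have "\<forall>\<^sub>F t in at t0. (\<integral>x. q t x \<partial>lborel) =
      ((\<integral>x. g t x \<partial>lborel) - (\<integral>x. g t0 x \<partial>lborel)) / (t - t0)"
    using near by eventually_elim (simp add: q_def g_int g_int_near)
  ultimately show ?thesis
    unfolding has_field_derivative_iff by (rule tendsto_cong[THEN iffD1, rotated])
qed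

lemma continuous_on_std_normal_density: "continuous_on UNIV std_normal_density"
  unfolding normal_density_def by (intro continuous_intros) auto

lemma std_normal_cdf_split:
  assumes "a \<le> v"
  shows "std_normal_cdf v = std_normal_cdf a + integral {a..v} std_normal_density"
proof -
  have set_int: "set_integrable lborel A std_normal_density" if "A \<in> sets lborel" for A
    unfolding set_integrable_def using integrable_mult_indicator[OF that integrable_normal_density] by simp
  have "std_normal_cdf v = (LBINT t:{..a} \<union> {a..v}. std_normal_density t)"
  proof -
    have "{..a} \<union> {a..v} = {..v}"
      using assms by auto
    then show ?thesis
      unfolding std_normal_cdf_def by simp
  qed
  also have "\<dots> = (LBINT t:{..a}. std_normal_density t) + (LBINT t:{a..v}. std_normal_density t)"
    by (rule set_integral_Un_AE) (auto intro!: set_int AE_I'[of "{a}"])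
  also have "(LBINT t:{a..v}. std_normal_density t) = integral {a..v} std_normal_density"
    by (rule set_borel_integral_eq_integral(2)) (auto intro!: set_int)
  finally show ?thesis
    unfolding std_normal_cdf_def .
qed

lemma has_real_derivative_std_normal_cdf:
  "(std_normal_cdf has_real_derivative std_normal_density x) (at x)"
proof -
  have "((\<lambda>v. std_normal_cdf (x - 1) + integral {x - 1..v} std_normal_density)
          has_real_derivative std_normal_density x) (at x within {x - 1..x + 1})"
    by (auto intro!: derivative_eq_intros integral_has_real_derivative
          continuous_on_subset[OF continuous_on_std_normal_density])
  then have "((\<lambda>v. std_normal_cdf (x - 1) + integral {x - 1..v} std_normal_density)
          has_real_derivative std_normal_density x) (at x)"
    by (subst (asm) at_within_Icc_at) auto
  then show ?thesis
    by (rule has_field_derivative_transform_within_open[of _ _ _ "{x - 1<..<x + 1}"])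
       (auto intro: std_normal_cdf_split[symmetric])
qed

lemma DERIV_std_normal_cdf [derivative_intros]:
  "(f has_real_derivative f') (at x within S) \<Longrightarrow>
   ((\<lambda>x. std_normal_cdf (f x)) has_real_derivative std_normal_density (f x) * f') (at x within S)"
  by (rule DERIV_chain2[OF has_real_derivative_std_normal_cdf])

lemma borel_measurable_std_normal_cdf [measurable]: "std_normal_cdf \<in> borel_measurable borel"
  by (rule borel_measurable_continuous_onI)
     (meson has_real_derivative_std_normal_cdf DERIV_continuous continuous_at_imp_continuous_on)

lemma std_normal_cdf_nonneg: "0 \<le> std_normal_cdf x"
  unfolding std_normal_cdf_def set_lebesgue_integral_def
  by (intro integral_nonneg_AE) (auto simp: indicator_def)

lemma std_normal_cdf_le_1: "std_normal_cdf x \<le> 1"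
proof -
  have "std_normal_cdf x \<le> (\<integral>t. std_normal_density t \<partial>lborel)"
    unfolding std_normal_cdf_def set_lebesgue_integral_def
    by (intro integral_mono integrable_mult_indicator) (auto simp: indicator_def)
  then show ?thesis
    by simp
qed

lemma normal_density_eq_std_normal_density:
  "\<sigma> > 0 \<Longrightarrow> normal_density \<mu> \<sigma> x = std_normal_density ((x - \<mu>) / \<sigma>) / \<sigma>"
  unfolding normal_density_def by (simp add: real_sqrt_mult power_divide)

lemma normal_density_le_exp:
  assumes "\<sigma> > 0"
  shows "normal_density \<mu> \<sigma> x \<le> exp (- (x - \<mu>)\<^sup>2 / (2 * \<sigma>\<^sup>2)) / \<sigma>"
proof -
  have "\<sigma> \<le> sqrt (2 * pi) * \<sigma>"
    using assms pi_gt3 by (intro mult_le_cancel_right1[THEN iffD2]) auto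
  then have "\<sigma> \<le> sqrt (2 * pi * \<sigma>\<^sup>2)"
    using assms by (simp add: real_sqrt_mult)
  then show ?thesis
    unfolding normal_density_def using assms by simp (intro divide_left_mono, auto)
qed

lemma integrable_abs_power_mul_exp_neg_sq:
  fixes a m :: real
  assumes "a > 0"
  shows "integrable lborel (\<lambda>x. \<bar>x - m\<bar> ^ k * exp (- a * (x - m)\<^sup>2))"
proof -
  define s where "s = sqrt (1 / (2 * a))"
  have s: "s > 0" "2 * s\<^sup>2 = 1 / a"
    using assms by (auto simp: s_def)
  have eq: "sqrt (2 * pi * s\<^sup>2) * (normal_density m s x * \<bar>x - m\<bar> ^ k) =
      \<bar>x - m\<bar> ^ k * exp (- a * (x - m)\<^sup>2)" for x
    using s assms by (simp add: normal_density_def field_simps)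
  have "integrable lborel (\<lambda>x. sqrt (2 * pi * s\<^sup>2) * (normal_density m s x * \<bar>x - m\<bar> ^ k))"
    by (intro Bochner_Integration.integrable_mult_right integrable_normal_moment_abs s(1))
  then show ?thesis
    by (simp only: eq)
qed

lemma power2_sum_le: "((a::real) + b)\<^sup>2 \<le> 2 * a\<^sup>2 + 2 * b\<^sup>2"
  using zero_le_power2[of "a - b"] by (simp add: power2_eq_square algebra_simps)

lemma std_normal_cdf_affine_diff_le:
  fixes \<mu> \<sigma> x :: real
  assumes "\<sigma> > 0"
  defines "c \<equiv> min 1 (1 / \<sigma>)"
  shows "\<bar>std_normal_cdf ((x - \<mu>) / \<sigma>) - std_normal_cdf x\<bar> \<le>
    exp (\<mu>\<^sup>2 / (2 * \<sigma>\<^sup>2)) * exp (- (c\<^sup>2 / 4) * x\<^sup>2) * (\<bar>1 / \<sigma> - 1\<bar> * \<bar>x\<bar> + \<bar>\<mu>\<bar> / \<sigma>)"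
proof -
  define d where "d = (x - \<mu>) / \<sigma> - x"
  have "((\<lambda>\<theta>. std_normal_cdf (x + \<theta> * d)) has_real_derivative std_normal_density (x + t * d) * d) (at t)"
    for t
    by (auto intro!: derivative_eq_intros)
  then obtain \<theta> where \<theta>: "0 < \<theta>" "\<theta> < 1"
    and mvt: "std_normal_cdf (x + 1 * d) - std_normal_cdf (x + 0 * d) =
      (1 - 0) * (std_normal_density (x + \<theta> * d) * d)"
    using MVT2[of 0 1 "\<lambda>\<theta>. std_normal_cdf (x + \<theta> * d)" "\<lambda>\<theta>. std_normal_density (x + \<theta> * d) * d"]
    by auto
  \<comment> \<open>The intermediate point is r x - \<theta> \<mu> / \<sigma> with r \<ge> c > 0, so the density there
    decays like a Gaussian in x.\<close>
  define r where "r = 1 - \<theta> + \<theta> / \<sigma>"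
  have intermediate: "x + \<theta> * d = r * x - \<theta> * \<mu> / \<sigma>"
    using assms by (simp add: d_def r_def field_simps)
  have "c \<le> r"
  proof -
    have "(1 - \<theta>) * c + \<theta> * c \<le> (1 - \<theta>) * 1 + \<theta> * (1 / \<sigma>)"
      using \<theta> by (intro add_mono mult_left_mono) (auto simp: c_def)
    then show ?thesis
      by (simp add: r_def algebra_simps)
  qed
  then have "(c * x)\<^sup>2 \<le> (r * x)\<^sup>2"
    using assms by (auto simp: power_mult_distrib c_def intro!: mult_right_mono power_mono)
  also have "\<dots> \<le> 2 * (x + \<theta> * d)\<^sup>2 + 2 * (\<theta> * \<mu> / \<sigma>)\<^sup>2"
    using power2_sum_le[of "x + \<theta> * d" "\<theta> * \<mu> / \<sigma>"] by (simp add: intermediate)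
  also have "(\<theta> * \<mu> / \<sigma>)\<^sup>2 \<le> (\<mu> / \<sigma>)\<^sup>2"
  proof -
    have "\<theta>\<^sup>2 * (\<mu> / \<sigma>)\<^sup>2 \<le> 1 * (\<mu> / \<sigma>)\<^sup>2"
      using \<theta> by (intro mult_right_mono power_le_one) auto
    then show ?thesis
      by (simp add: power_mult_distrib power_divide)
  qed
  finally have exponent: "- (x + \<theta> * d)\<^sup>2 / 2 \<le> \<mu>\<^sup>2 / (2 * \<sigma>\<^sup>2) + - (c\<^sup>2 / 4) * x\<^sup>2"
    by (simp add: power_mult_distrib power_divide field_simps)
  have "std_normal_density (x + \<theta> * d) \<le> exp (- (x + \<theta> * d)\<^sup>2 / 2)"
    using normal_density_le_exp[of 1 0 "x + \<theta> * d"] by simp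
  also have "\<dots> \<le> exp (\<mu>\<^sup>2 / (2 * \<sigma>\<^sup>2)) * exp (- (c\<^sup>2 / 4) * x\<^sup>2)"
    using exponent by (simp flip: exp_add)
  finally have density: "std_normal_density (x + \<theta> * d) \<le> exp (\<mu>\<^sup>2 / (2 * \<sigma>\<^sup>2)) * exp (- (c\<^sup>2 / 4) * x\<^sup>2)" .
  have "\<bar>d\<bar> \<le> \<bar>1 / \<sigma> - 1\<bar> * \<bar>x\<bar> + \<bar>\<mu>\<bar> / \<sigma>"
  proof -
    have "d = (1 / \<sigma> - 1) * x - \<mu> / \<sigma>"
      using assms by (simp add: d_def field_simps)
    then show ?thesis
      using assms abs_triangle_ineq4[of "(1 / \<sigma> - 1) * x" "\<mu> / \<sigma>"] by (simp add: abs_mult)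
  qed
  then show ?thesis
    using mvt density by (auto simp: d_def abs_mult intro!: mult_mono)
qed

lemma integrable_std_normal_cdf_affine_diff:
  assumes "\<sigma> > 0"
  shows "integrable lborel (\<lambda>x. std_normal_cdf ((x - \<mu>) / \<sigma>) - std_normal_cdf x)"
proof -
  define c where "c = min 1 (1 / \<sigma>)"
  define E where "E = exp (\<mu>\<^sup>2 / (2 * \<sigma>\<^sup>2))"
  define w where "w x = E * exp (- (c\<^sup>2 / 4) * x\<^sup>2) * (\<bar>1 / \<sigma> - 1\<bar> * \<bar>x\<bar> + \<bar>\<mu>\<bar> / \<sigma>)" for x
  have "c > 0"
    using assms by (simp add: c_def)
  then have "c\<^sup>2 / 4 > 0"
    by simp
  then have gauss: "integrable lborel (\<lambda>x. \<bar>x\<bar> ^ k * exp (- (c\<^sup>2 / 4) * x\<^sup>2))" for k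
    using integrable_abs_power_mul_exp_neg_sq[of "c\<^sup>2 / 4" 0 k] by simp
  have "w = (\<lambda>x. (E * \<bar>1 / \<sigma> - 1\<bar>) * (\<bar>x\<bar> ^ 1 * exp (- (c\<^sup>2 / 4) * x\<^sup>2)) +
      (E * \<bar>\<mu>\<bar> / \<sigma>) * (\<bar>x\<bar> ^ 0 * exp (- (c\<^sup>2 / 4) * x\<^sup>2)))"
    by (auto simp: w_def fun_eq_iff algebra_simps)
  then have "integrable lborel w"
    by (simp only:) (intro Bochner_Integration.integrable_add Bochner_Integration.integrable_mult_right gauss)
  then show ?thesis
  proof (rule Bochner_Integration.integrable_bound)
    show "AE x in lborel. norm (std_normal_cdf ((x - \<mu>) / \<sigma>) - std_normal_cdf x) \<le> norm (w x)"
      using std_normal_cdf_affine_diff_le[OF assms, where \<mu> = \<mu>]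
      by (auto simp: w_def c_def E_def intro: order_trans[OF _ abs_ge_self])
  qed measurable
qed

lemma gm_cdf_nonneg: "is_gm n p sg \<Longrightarrow> 0 \<le> gm_cdf n p mu sg x"
  unfolding is_gm_def gm_cdf_def by (auto intro!: sum_nonneg mult_nonneg_nonneg std_normal_cdf_nonneg)

lemma gm_cdf_le_1:
  assumes "is_gm n p sg"
  shows "gm_cdf n p mu sg x \<le> 1"
proof -
  have "gm_cdf n p mu sg x \<le> (\<Sum>j<n. p j)"
    using assms unfolding is_gm_def gm_cdf_def
    by (intro sum_mono) (auto intro: mult_right_le_one_le std_normal_cdf_nonneg std_normal_cdf_le_1)
  then show ?thesis
    using assms by (simp add: is_gm_def)
qed

lemma abs_gm_cdf_diff_le_1:
  "is_gm n p sg \<Longrightarrow> is_gm n' p' sg' \<Longrightarrow> \<bar>gm_cdf n p mu sg x - gm_cdf n' p' mu' sg' x\<bar> \<le> 1"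
  using gm_cdf_nonneg[of n p sg mu x] gm_cdf_le_1[of n p sg mu x]
    gm_cdf_nonneg[of n' p' sg' mu' x] gm_cdf_le_1[of n' p' sg' mu' x] by linarith

lemma is_gm_weight_le_1:
  assumes "is_gm n p sg" "j < n"
  shows "p j \<le> 1"
proof -
  have "(\<Sum>i\<in>{j}. p i) \<le> (\<Sum>i<n. p i)"
    using assms by (intro sum_mono2) (auto simp: is_gm_def)
  then show ?thesis
    using assms by (simp add: is_gm_def)
qed

lemma is_gm_fun_upd: "is_gm n p sg \<Longrightarrow> s > 0 \<Longrightarrow> is_gm n p (sg(j := s))"
  by (simp add: is_gm_def)

lemma borel_measurable_gm_cdf [measurable]: "gm_cdf n p mu sg \<in> borel_measurable borel"
  unfolding gm_cdf_def by measurable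

lemma integrable_gm_cdf_diff_std_normal_cdf:
  assumes "is_gm n p sg"
  shows "integrable lborel (\<lambda>x. gm_cdf n p mu sg x - std_normal_cdf x)"
proof -
  have "gm_cdf n p mu sg x - std_normal_cdf x =
      (\<Sum>j<n. p j * (std_normal_cdf ((x - mu j) / sg j) - std_normal_cdf x))" for x
    using assms by (simp add: is_gm_def gm_cdf_def right_diff_distrib sum_subtractf
        flip: sum_distrib_right)
  moreover have "integrable lborel
      (\<lambda>x. \<Sum>j<n. p j * (std_normal_cdf ((x - mu j) / sg j) - std_normal_cdf x))"
    using assms unfolding is_gm_def
    by (intro Bochner_Integration.integrable_sum Bochner_Integration.integrable_mult_right
        integrable_std_normal_cdf_affine_diff) auto
  ultimately show ?thesis
    by simp
qed

lemma integrable_cramer2_integrand: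
  assumes "is_gm n p sg" "is_gm n' p' sg'"
  shows "integrable lborel (\<lambda>x. (gm_cdf n p mu sg x - gm_cdf n' p' mu' sg' x)\<^sup>2)"
proof (rule Bochner_Integration.integrable_bound)
  show "integrable lborel (\<lambda>x. \<bar>gm_cdf n p mu sg x - std_normal_cdf x\<bar> +
      \<bar>gm_cdf n' p' mu' sg' x - std_normal_cdf x\<bar>)"
    using assms by (intro Bochner_Integration.integrable_add integrable_abs
        integrable_gm_cdf_diff_std_normal_cdf)
  show "AE x in lborel. norm ((gm_cdf n p mu sg x - gm_cdf n' p' mu' sg' x)\<^sup>2) \<le>
      norm (\<bar>gm_cdf n p mu sg x - std_normal_cdf x\<bar> + \<bar>gm_cdf n' p' mu' sg' x - std_normal_cdf x\<bar>)"
  proof (rule AE_I2)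
    fix x
    let ?d = "gm_cdf n p mu sg x - gm_cdf n' p' mu' sg' x"
    have "?d\<^sup>2 \<le> \<bar>?d\<bar>"
      using mult_left_le_one_le[of "\<bar>?d\<bar>" "\<bar>?d\<bar>"] abs_gm_cdf_diff_le_1[OF assms]
      by (simp add: power2_eq_square)
    then show "norm (?d\<^sup>2) \<le> norm (\<bar>gm_cdf n p mu sg x - std_normal_cdf x\<bar> +
        \<bar>gm_cdf n' p' mu' sg' x - std_normal_cdf x\<bar>)"
      by simp
  qed
qed simp

lemma has_real_derivative_integral_power2:
  fixes u u' :: "real \<Rightarrow> real \<Rightarrow> real" and v k :: "real \<Rightarrow> real"
  assumes "\<delta> > 0"
    and u_meas: "\<And>t. u t \<in> borel_measurable lborel"
    and u'_meas: "u' t0 \<in> borel_measurable lborel"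
    and u_int: "integrable lborel (\<lambda>x. (u t0 x)\<^sup>2)"
    and u_bound: "\<And>t x. \<bar>t - t0\<bar> < \<delta> \<Longrightarrow> \<bar>u t x\<bar> \<le> 1"
    and u_deriv: "\<And>t x. \<bar>t - t0\<bar> < \<delta> \<Longrightarrow> ((\<lambda>t. u t x) has_real_derivative u' t x) (at t)"
    and u'_bound: "\<And>t x. \<bar>t - t0\<bar> < \<delta> \<Longrightarrow> \<bar>u' t x\<bar> \<le> v x"
    and v_int: "integrable lborel v"
    and k_int: "integrable lborel k"
    and u'_le_k: "\<And>x. \<bar>u' t0 x\<bar> \<le> k x"
  shows "\<exists>D. ((\<lambda>t. \<integral>x. (u t x)\<^sup>2 \<partial>lborel) has_real_derivative D) (at t0) \<and>
    \<bar>D\<bar> \<le> 2 * (\<integral>x. k x \<partial>lborel)"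
proof (intro exI conjI)
  have product_bound: "\<bar>2 * u t x * u' t x\<bar> \<le> 2 * b" if "\<bar>t - t0\<bar> < \<delta>" "\<bar>u' t x\<bar> \<le> b" for t x b
    using mult_mono[OF u_bound[OF that(1)] that(2)] by (simp add: abs_mult)
  show "((\<lambda>t. \<integral>x. (u t x)\<^sup>2 \<partial>lborel) has_real_derivative (\<integral>x. 2 * u t0 x * u' t0 x \<partial>lborel)) (at t0)"
  proof (rule has_real_derivative_lebesgue_integral[OF \<open>\<delta> > 0\<close>, where w = "\<lambda>x. 2 * v x"])
    show "(\<lambda>x. (u t x)\<^sup>2) \<in> borel_measurable lborel" for t
      using u_meas[of t] by measurable
    show "(\<lambda>x. 2 * u t0 x * u' t0 x) \<in> borel_measurable lborel"
      using u_meas[of t0] u'_meas by measurable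
    show "((\<lambda>t. (u t x)\<^sup>2) has_real_derivative 2 * u t x * u' t x) (at t)" if "\<bar>t - t0\<bar> < \<delta>" for t x
      using u_deriv[OF that, of x] by (auto intro!: derivative_eq_intros)
    show "\<bar>2 * u t x * u' t x\<bar> \<le> 2 * v x" if "\<bar>t - t0\<bar> < \<delta>" for t x
      using product_bound[OF that u'_bound[OF that]] .
  qed (use u_int v_int in simp_all)
  have bound_k: "\<bar>2 * u t0 x * u' t0 x\<bar> \<le> 2 * k x" for x
    using product_bound[OF _ u'_le_k] \<open>\<delta> > 0\<close> by simp
  have "integrable lborel (\<lambda>x. 2 * k x)"
    using k_int by simp
  moreover from this have "integrable lborel (\<lambda>x. 2 * u t0 x * u' t0 x)"
    by (rule Bochner_Integration.integrable_bound)
       (use u_meas[of t0] u'_meas bound_k in \<open>auto intro: order_trans[OF _ abs_ge_self]\<close>)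
  ultimately have "\<bar>\<integral>x. 2 * u t0 x * u' t0 x \<partial>lborel\<bar> \<le> (\<integral>x. 2 * k x \<partial>lborel)"
    using bound_k by (intro integral_abs_bound_integral)
  then show "\<bar>\<integral>x. 2 * u t0 x * u' t0 x \<partial>lborel\<bar> \<le> 2 * (\<integral>x. k x \<partial>lborel)"
    by simp
qed

lemma normal_density_le_shifted:
  assumes "\<sigma> > 0" "\<bar>m - \<mu>\<bar> \<le> 1"
  shows "normal_density m \<sigma> x \<le> exp (1 / (2 * \<sigma>\<^sup>2)) / \<sigma> * exp (- (1 / (4 * \<sigma>\<^sup>2)) * (x - \<mu>)\<^sup>2)"
proof -
  have "(m - \<mu>)\<^sup>2 \<le> 1"
    using power_mono[OF assms(2) abs_ge_zero, of 2] by simp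
  then have "(x - \<mu>)\<^sup>2 \<le> 2 * (x - m)\<^sup>2 + 2"
    using power2_sum_le[of "x - m" "m - \<mu>"] by simp
  then have "- (x - m)\<^sup>2 / (2 * \<sigma>\<^sup>2) \<le> 1 / (2 * \<sigma>\<^sup>2) + - (1 / (4 * \<sigma>\<^sup>2)) * (x - \<mu>)\<^sup>2"
    using assms(1) by (simp add: field_simps)
  then have exponent: "exp (- (x - m)\<^sup>2 / (2 * \<sigma>\<^sup>2)) \<le>
      exp (1 / (2 * \<sigma>\<^sup>2) + - (1 / (4 * \<sigma>\<^sup>2)) * (x - \<mu>)\<^sup>2)"
    by (simp only: exp_le_cancel_iff)
  have "normal_density m \<sigma> x \<le> exp (- (x - m)\<^sup>2 / (2 * \<sigma>\<^sup>2)) / \<sigma>"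
    using normal_density_le_exp[OF assms(1)] .
  also have "\<dots> \<le> exp (1 / (2 * \<sigma>\<^sup>2) + - (1 / (4 * \<sigma>\<^sup>2)) * (x - \<mu>)\<^sup>2) / \<sigma>"
    using exponent assms(1) by (simp add: divide_right_mono)
  also have "\<dots> = exp (1 / (2 * \<sigma>\<^sup>2)) / \<sigma> * exp (- (1 / (4 * \<sigma>\<^sup>2)) * (x - \<mu>)\<^sup>2)"
    unfolding exp_add by simp
  finally show ?thesis .
qed

lemma normal_density_mult_abs_div_le:
  assumes "\<sigma> > 0" "\<bar>s - \<sigma>\<bar> < \<sigma> / 2"
  shows "normal_density \<mu> s x * \<bar>x - \<mu>\<bar> / s \<le>
    4 / \<sigma>\<^sup>2 * (\<bar>x - \<mu>\<bar> * exp (- (2 / (9 * \<sigma>\<^sup>2)) * (x - \<mu>)\<^sup>2))"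
proof -
  have s: "\<sigma> / 2 < s" "s < 3 * \<sigma> / 2"
    using assms(2) abs_less_iff[of "s - \<sigma>"] by linarith+
  have "(\<sigma> / 2)\<^sup>2 \<le> s\<^sup>2" "s\<^sup>2 \<le> (3 * \<sigma> / 2)\<^sup>2"
    using s assms(1) by (auto intro!: power_mono)
  then have s2: "\<sigma>\<^sup>2 \<le> 4 * s\<^sup>2" "4 * s\<^sup>2 \<le> 9 * \<sigma>\<^sup>2"
    by (simp_all add: power_divide)
  have "4 * s\<^sup>2 * (x - \<mu>)\<^sup>2 \<le> 9 * \<sigma>\<^sup>2 * (x - \<mu>)\<^sup>2"
    by (rule mult_right_mono[OF s2(2)]) simp
  then have "- (x - \<mu>)\<^sup>2 / (2 * s\<^sup>2) \<le> - (2 / (9 * \<sigma>\<^sup>2)) * (x - \<mu>)\<^sup>2"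
    using s assms(1) by (simp add: field_simps)
  then have "exp (- (x - \<mu>)\<^sup>2 / (2 * s\<^sup>2)) / s \<le> exp (- (2 / (9 * \<sigma>\<^sup>2)) * (x - \<mu>)\<^sup>2) / s"
    using s assms(1) by (intro divide_right_mono) auto
  then have "normal_density \<mu> s x \<le> exp (- (2 / (9 * \<sigma>\<^sup>2)) * (x - \<mu>)\<^sup>2) / s"
    using normal_density_le_exp[of s \<mu> x] s assms(1) by linarith
  moreover have "1 / s\<^sup>2 \<le> 4 / \<sigma>\<^sup>2"
    using s2 s assms(1) by (simp add: field_simps)
  ultimately have "normal_density \<mu> s x * \<bar>x - \<mu>\<bar> / s \<le>
      exp (- (2 / (9 * \<sigma>\<^sup>2)) * (x - \<mu>)\<^sup>2) / s * \<bar>x - \<mu>\<bar> / s"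
    using s assms(1) by (intro divide_right_mono mult_right_mono) auto
  also have "\<dots> = 1 / s\<^sup>2 * (\<bar>x - \<mu>\<bar> * exp (- (2 / (9 * \<sigma>\<^sup>2)) * (x - \<mu>)\<^sup>2))"
    by (simp add: power2_eq_square)
  also have "\<dots> \<le> 4 / \<sigma>\<^sup>2 * (\<bar>x - \<mu>\<bar> * exp (- (2 / (9 * \<sigma>\<^sup>2)) * (x - \<mu>)\<^sup>2))"
    using \<open>1 / s\<^sup>2 \<le> 4 / \<sigma>\<^sup>2\<close> by (intro mult_right_mono) auto
  finally show ?thesis .
qed

lemma gm_cdf_fun_upd:
  assumes "j < n"
  shows "gm_cdf n p (mu(j := m)) (sg(j := s)) x =
    gm_cdf n p mu sg x + p j * (std_normal_cdf ((x - m) / s) - std_normal_cdf ((x - mu j) / sg j))"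
proof -
  have split: "gm_cdf n p mu' sg' x = p j * std_normal_cdf ((x - mu' j) / sg' j) +
      (\<Sum>i\<in>{..<n} - {j}. p i * std_normal_cdf ((x - mu' i) / sg' i))" for mu' sg'
    unfolding gm_cdf_def using assms by (simp add: sum.remove)
  have "(\<Sum>i\<in>{..<n} - {j}. p i * std_normal_cdf ((x - (mu(j := m)) i) / (sg(j := s)) i)) =
      (\<Sum>i\<in>{..<n} - {j}. p i * std_normal_cdf ((x - mu i) / sg i))"
    by (rule sum.cong) auto
  then show ?thesis
    unfolding split[of "mu(j := m)"] split[of mu] by (simp add: right_diff_distrib)
qed

lemma gm_cdf_mean_has_real_derivative:
  assumes "j < n" "sg j > 0"
  shows "((\<lambda>m. gm_cdf n p (mu(j := m)) sg x) has_real_derivative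
    - p j * normal_density m (sg j) x) (at m)"
proof -
  have "gm_cdf n p (mu(j := m')) sg x = gm_cdf n p mu sg x +
      p j * (std_normal_cdf ((x - m') / sg j) - std_normal_cdf ((x - mu j) / sg j))" for m'
    using gm_cdf_fun_upd[OF assms(1), of p mu m' sg "sg j" x] by simp
  moreover have "((\<lambda>m. gm_cdf n p mu sg x +
      p j * (std_normal_cdf ((x - m) / sg j) - std_normal_cdf ((x - mu j) / sg j)))
      has_real_derivative - p j * normal_density m (sg j) x) (at m)"
    using assms(2) by (auto intro!: derivative_eq_intros
        simp: normal_density_eq_std_normal_density[OF assms(2), of m x])
  ultimately show ?thesis
    by simp
qed

lemma gm_cdf_sd_has_real_derivative:
  assumes "j < n" "s > 0"
  shows "((\<lambda>s. gm_cdf n p mu (sg(j := s)) x) has_real_derivative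
    - p j * (normal_density (mu j) s x * (x - mu j) / s)) (at s)"
proof -
  have "gm_cdf n p mu (sg(j := s')) x = gm_cdf n p mu sg x +
      p j * (std_normal_cdf ((x - mu j) / s') - std_normal_cdf ((x - mu j) / sg j))" for s'
    using gm_cdf_fun_upd[OF assms(1), of p mu "mu j" sg s' x] by simp
  moreover have "((\<lambda>s. gm_cdf n p mu sg x +
      p j * (std_normal_cdf ((x - mu j) / s) - std_normal_cdf ((x - mu j) / sg j)))
      has_real_derivative - p j * (normal_density (mu j) s x * (x - mu j) / s)) (at s)"
    using assms(2)
    by (auto intro!: derivative_eq_intros
        simp: normal_density_eq_std_normal_density[OF assms(2), of "mu j" x] field_simps)
  ultimately show ?thesis
    by simp
qed

lemma cramer2_sq_mean_has_real_derivative: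
  assumes "is_gm n p sg" "is_gm n' p' sg'" "j < n"
  shows "\<exists>D. ((\<lambda>m. cramer2_sq n p (mu(j := m)) sg n' p' mu' sg') has_real_derivative D) (at (mu j))
    \<and> \<bar>D\<bar> \<le> 2"
proof -
  define \<sigma> where "\<sigma> = sg j"
  have \<sigma>: "\<sigma> > 0" and pj: "0 \<le> p j" "p j \<le> 1"
    using assms is_gm_weight_le_1 by (auto simp: is_gm_def \<sigma>_def)
  define u where "u m x = gm_cdf n p (mu(j := m)) sg x - gm_cdf n' p' mu' sg' x" for m x
  define v where "v x = exp (1 / (2 * \<sigma>\<^sup>2)) / \<sigma> * exp (- (1 / (4 * \<sigma>\<^sup>2)) * (x - mu j)\<^sup>2)" for x
  have "\<exists>D. ((\<lambda>m. \<integral>x. (u m x)\<^sup>2 \<partial>lborel) has_real_derivative D) (at (mu j)) \<and>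
      \<bar>D\<bar> \<le> 2 * (\<integral>x. p j * normal_density (mu j) \<sigma> x \<partial>lborel)" (is "\<exists>D. ?deriv D \<and> _")
  proof (rule has_real_derivative_integral_power2[where \<delta> = 1 and v = v and
        u' = "\<lambda>m x. - p j * normal_density m \<sigma> x"])
    show "u t \<in> borel_measurable lborel" for t
      unfolding u_def by measurable
    show "integrable lborel (\<lambda>x. (u (mu j) x)\<^sup>2)"
      unfolding u_def using integrable_cramer2_integrand[OF assms(1,2)] by simp
    show "\<bar>u t x\<bar> \<le> 1" for t x
      unfolding u_def using abs_gm_cdf_diff_le_1[OF assms(1,2)] .
    show "((\<lambda>t. u t x) has_real_derivative - p j * normal_density t \<sigma> x) (at t)" for t x
      unfolding u_def \<sigma>_def
      using DERIV_diff[OF gm_cdf_mean_has_real_derivative[where sg = sg, OF assms(3) \<sigma>[unfolded \<sigma>_def]] DERIV_const]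
      by simp
    show "\<bar>- p j * normal_density t \<sigma> x\<bar> \<le> v x" if "\<bar>t - mu j\<bar> < 1" for t x
    proof -
      have "\<bar>- p j * normal_density t \<sigma> x\<bar> \<le> normal_density t \<sigma> x"
        using pj by (simp add: abs_mult mult_left_le_one_le)
      also have "\<dots> \<le> v x"
        using normal_density_le_shifted[OF \<sigma>, of t "mu j" x] that by (simp add: v_def)
      finally show ?thesis .
    qed
    show "integrable lborel v"
      unfolding v_def using \<sigma> integrable_abs_power_mul_exp_neg_sq[of "1 / (4 * \<sigma>\<^sup>2)" "mu j" 0] by simp
    show "\<bar>- p j * normal_density (mu j) \<sigma> x\<bar> \<le> p j * normal_density (mu j) \<sigma> x" for x
      using pj by (simp add: abs_mult)
  qed (use \<sigma> in simp_all)
  then obtain D where "?deriv D" "\<bar>D\<bar> \<le> 2 * (\<integral>x. p j * normal_density (mu j) \<sigma> x \<partial>lborel)"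
    by blast
  moreover have "(\<integral>x. p j * normal_density (mu j) \<sigma> x \<partial>lborel) \<le> 1"
    using pj integral_normal_density[OF \<sigma>, of "mu j"] by simp
  moreover have "(\<lambda>m. cramer2_sq n p (mu(j := m)) sg n' p' mu' sg') = (\<lambda>m. \<integral>x. (u m x)\<^sup>2 \<partial>lborel)"
    by (simp add: cramer2_sq_def u_def)
  ultimately show ?thesis
    by auto
qed

lemma cramer2_sq_sd_has_real_derivative:
  assumes "is_gm n p sg" "is_gm n' p' sg'" "j < n"
  shows "\<exists>D. ((\<lambda>s. cramer2_sq n p mu (sg(j := s)) n' p' mu' sg') has_real_derivative D) (at (sg j))
    \<and> \<bar>D\<bar> \<le> 2"
proof -
  define \<sigma> where "\<sigma> = sg j"
  define \<mu> where "\<mu> = mu j"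
  have \<sigma>: "\<sigma> > 0" and pj: "0 \<le> p j" "p j \<le> 1"
    using assms is_gm_weight_le_1 by (auto simp: is_gm_def \<sigma>_def)
  have near_pos: "s > 0" if "\<bar>s - \<sigma>\<bar> < \<sigma> / 2" for s
    using that abs_less_iff[of "s - \<sigma>"] by linarith
  define u where "u s x = gm_cdf n p mu (sg(j := s)) x - gm_cdf n' p' mu' sg' x" for s x
  define v where "v x = 4 / \<sigma>\<^sup>2 * (\<bar>x - \<mu>\<bar> * exp (- (2 / (9 * \<sigma>\<^sup>2)) * (x - \<mu>)\<^sup>2))" for x
  define k where "k x = p j * (normal_density \<mu> \<sigma> x * \<bar>x - \<mu>\<bar>) / \<sigma>" for x
  have "\<exists>D. ((\<lambda>s. \<integral>x. (u s x)\<^sup>2 \<partial>lborel) has_real_derivative D) (at \<sigma>) \<and>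
      \<bar>D\<bar> \<le> 2 * (\<integral>x. k x \<partial>lborel)" (is "\<exists>D. ?deriv D \<and> _")
  proof (rule has_real_derivative_integral_power2[where \<delta> = "\<sigma> / 2" and v = v and
        u' = "\<lambda>s x. - p j * (normal_density \<mu> s x * (x - \<mu>) / s)"])
    show "u t \<in> borel_measurable lborel" for t
      unfolding u_def by measurable
    show "integrable lborel (\<lambda>x. (u \<sigma> x)\<^sup>2)"
      unfolding u_def \<sigma>_def using integrable_cramer2_integrand[OF assms(1,2)] by simp
    show "\<bar>u t x\<bar> \<le> 1" if "\<bar>t - \<sigma>\<bar> < \<sigma> / 2" for t x
      unfolding u_def
      using abs_gm_cdf_diff_le_1[OF is_gm_fun_upd[OF assms(1) near_pos[OF that]] assms(2)] .
    show "((\<lambda>t. u t x) has_real_derivative - p j * (normal_density \<mu> t x * (x - \<mu>) / t)) (at t)"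
      if "\<bar>t - \<sigma>\<bar> < \<sigma> / 2" for t x
      unfolding u_def \<mu>_def
      using DERIV_diff[OF gm_cdf_sd_has_real_derivative[OF assms(3) near_pos[OF that]] DERIV_const]
      by simp
    show "\<bar>- p j * (normal_density \<mu> t x * (x - \<mu>) / t)\<bar> \<le> v x" if "\<bar>t - \<sigma>\<bar> < \<sigma> / 2" for t x
    proof -
      have "\<bar>- p j * (normal_density \<mu> t x * (x - \<mu>) / t)\<bar> =
          p j * (normal_density \<mu> t x * \<bar>x - \<mu>\<bar> / t)"
        using near_pos[OF that] pj by (simp add: abs_mult abs_divide)
      also have "\<dots> \<le> normal_density \<mu> t x * \<bar>x - \<mu>\<bar> / t"
        using near_pos[OF that] pj by (intro mult_left_le_one_le) auto
      also have "\<dots> \<le> v x"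
        using normal_density_mult_abs_div_le[OF \<sigma> that, of \<mu> x] by (simp add: v_def)
      finally show ?thesis .
    qed
    show "integrable lborel v"
      unfolding v_def using \<sigma> integrable_abs_power_mul_exp_neg_sq[of "2 / (9 * \<sigma>\<^sup>2)" \<mu> 1] by simp
    show "integrable lborel k"
      unfolding k_def using integrable_normal_moment_abs[OF \<sigma>, of \<mu> 1] by simp
    show "\<bar>- p j * (normal_density \<mu> \<sigma> x * (x - \<mu>) / \<sigma>)\<bar> \<le> k x" for x
      using pj \<sigma> by (simp add: k_def abs_mult abs_divide)
  qed (use \<sigma> in simp_all)
  then obtain D where "?deriv D" "\<bar>D\<bar> \<le> 2 * (\<integral>x. k x \<partial>lborel)"
    by blast
  moreover have "(\<integral>x. k x \<partial>lborel) \<le> 1"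
  proof -
    have "(\<integral>x. k x \<partial>lborel) = p j * sqrt (2 / pi)"
      unfolding k_def using integral_normal_moment_abs_odd[OF \<sigma>, of \<mu> 0] \<sigma> by simp
    also have "\<dots> \<le> 1 * 1"
      using pj pi_gt3 by (intro mult_mono) auto
    finally show ?thesis
      by simp
  qed
  moreover have "(\<lambda>s. cramer2_sq n p mu (sg(j := s)) n' p' mu' sg') = (\<lambda>s. \<integral>x. (u s x)\<^sup>2 \<partial>lborel)"
    by (simp add: cramer2_sq_def u_def)
  ultimately show ?thesis
    unfolding \<sigma>_def by auto
qed

theorem theorem3:
  fixes n n' :: nat and p mu sg p' mu' sg' :: "nat \<Rightarrow> real" and j :: nat
  assumes "is_gm n p sg" and "is_gm n' p' sg'" and "j < n"
  shows "(\<exists>D. ((\<lambda>m. cramer2_sq n p (mu(j := m)) sg n' p' mu' sg')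
                    has_real_derivative D) (at (mu j)) \<and> \<bar>D\<bar> \<le> 4)
       \<and> (\<exists>D. ((\<lambda>s. cramer2_sq n p mu (sg(j := s)) n' p' mu' sg')
                    has_real_derivative D) (at (sg j)) \<and> \<bar>D\<bar> \<le> 4)"
  using cramer2_sq_mean_has_real_derivative[OF assms] cramer2_sq_sd_has_real_derivative[OF assms]
  by fastforce

end
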